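(* Let $\Lambda_{[n]}=\{\{1,2,\dots,n\}:n\in\mathbb N\}\subseteq\mathcal P_{fin}(\mathbb N)$ (where $\mathbb N=\{1,2,3,\dots\}$), let $I$ be a fine ideal of $\mathfrak F(\mathcal P_{fin}(\mathbb N),\mathbb R)$ containing $I_{0,\Lambda_{[n]}}$, and let $P$ be the probability of the NAP-space produced by $(\mathbb N,1,I)$ (constant weight $1$). If $A\subseteq\mathbb N$ and the limit $L=\lim_{n\to\infty}|A\cap\{1,\dots,n\}|/n$ exists (in the classical sense), then $P(A)-L$ is infinitesimal.
   Context: $\mathcal P_{fin}(\Omega)$ is the set of finite subsets of $\Omega$ and $\mathfrak F=\mathfrak F(\mathcal P_{fin}(\Omega),\mathbb R)$ the real algebra of functions $\mathcal P_{fin}(\Omega)\to\mathbb R$ with pointwise operations. For $\omega\in\Omega$, $\chi_\lambda(\omega)=1$ if $\omega\in\lambda$, else $0$. An ideal $I$ of $\mathfrak F$ is fine if it is maximal and $\lambda\mapsto 1-\chi_\lambda(\omega)$ lies in $I$ for every $\omega\in\Omega$. For $\Lambda\subseteq\mathcal P_{fin}(\Omega)$, $I_{0,\Lambda}=\{\varphi\in\mathfrak F:\varphi(\lambda)=0\text{ for all }\lambda\in\Lambda\}$. The NAP-space produced by $(\Omega,w,I)$ ($w:\Omega\to\mathbb R^+$, $I$ fine) has range field $\mathfrak F/I$, $J$ the canonical projection $\varphi\mapsto\varphi+I$, and $P(A)=J\big(\lambda\mapsto\sum_{\omega\in A\cap\lambda}w(\omega)\big)/J\big(\lambda\mapsto\sum_{\omega\in\lambda}w(\omega)\big)$.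 An element $x$ of this ordered field is infinitesimal if $|x|<1/n$ for all $n\in\mathbb N$. *)

theory Defs
  imports Complex_Main "HOL-Library.FSet" "HOL-Algebra.QuotRing"
begin

text \<open>The real algebra F(P_fin(Omega), R) of all real functions on the finite
subsets of Omega (Omega = UNIV :: 'a), with pointwise operations, as a HOL-Algebra ring.\<close>

definition FunAlg :: "('a fset \<Rightarrow> real) ring" where
  "FunAlg = \<lparr>carrier = UNIV, monoid.mult = (\<lambda>f g l. f l * g l), one = (\<lambda>_. 1),
             zero = (\<lambda>_. 0), add = (\<lambda>f g l. f l + g l)\<rparr>"

definition chi :: "'a fset \<Rightarrow> 'a \<Rightarrow> real" where
  "chi l \<omega> = (if \<omega> |\<in>| l then 1 else 0)"

definition fine_ideal :: "('a fset \<Rightarrow> real) set \<Rightarrow> bool" where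
  "fine_ideal I \<longleftrightarrow> maximalideal I FunAlg \<and> (\<forall>\<omega>. (\<lambda>l. 1 - chi l \<omega>) \<in> I)"

definition I0 :: "'a fset set \<Rightarrow> ('a fset \<Rightarrow> real) set" where
  "I0 \<Lambda> = {\<phi>. \<forall>l\<in>\<Lambda>. \<phi> l = 0}"

abbreviation QF :: "('a fset \<Rightarrow> real) set \<Rightarrow> ('a fset \<Rightarrow> real) set ring" where
  "QF I \<equiv> FunAlg Quot I"

definition projJ :: "('a fset \<Rightarrow> real) set \<Rightarrow> ('a fset \<Rightarrow> real) \<Rightarrow> ('a fset \<Rightarrow> real) set" where
  "projJ I \<phi> = I +>\<^bsub>FunAlg\<^esub> \<phi>"

definition napP :: "('a \<Rightarrow> real) \<Rightarrow> ('a fset \<Rightarrow> real) set \<Rightarrow> 'a set \<Rightarrow> ('a fset \<Rightarrow> real) set" where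
  "napP w I A =
     projJ I (\<lambda>l. \<Sum>\<omega>\<in>fset l \<inter> A. w \<omega>) \<otimes>\<^bsub>QF I\<^esub>
     inv\<^bsub>QF I\<^esub> (projJ I (\<lambda>l. \<Sum>\<omega>\<in>fset l. w \<omega>))"

definition qle :: "('a fset \<Rightarrow> real) set \<Rightarrow> ('a fset \<Rightarrow> real) set \<Rightarrow> ('a fset \<Rightarrow> real) set \<Rightarrow> bool" where
  "qle I x y \<longleftrightarrow> (\<exists>\<phi> \<psi>. x = projJ I \<phi> \<and> y = projJ I \<psi> \<and> (\<forall>l. \<phi> l \<le> \<psi> l))"

definition qlt :: "('a fset \<Rightarrow> real) set \<Rightarrow> ('a fset \<Rightarrow> real) set \<Rightarrow> ('a fset \<Rightarrow> real) set \<Rightarrow> bool" where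
  "qlt I x y \<longleftrightarrow> qle I x y \<and> x \<noteq> y"

definition qabs :: "('a fset \<Rightarrow> real) set \<Rightarrow> ('a fset \<Rightarrow> real) set \<Rightarrow> ('a fset \<Rightarrow> real) set" where
  "qabs I x = (if qle I \<zero>\<^bsub>QF I\<^esub> x then x else \<ominus>\<^bsub>QF I\<^esub> x)"

definition qinfinitesimal :: "('a fset \<Rightarrow> real) set \<Rightarrow> ('a fset \<Rightarrow> real) set \<Rightarrow> bool" where
  "qinfinitesimal I x \<longleftrightarrow> (\<forall>n::nat. n \<ge> 1 \<longrightarrow> qlt I (qabs I x) (projJ I (\<lambda>_. 1 / real n)))"

typedef pnat = "{n::nat. 0 < n}" morphisms nat_of_pnat Abs_pnat
  by auto

definition initseg :: "nat \<Rightarrow> pnat set" where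
  "initseg n = Abs_pnat ` {1..n}"

definition Lambda_n :: "pnat fset set" where
  "Lambda_n = {Abs_fset (initseg n) | n. n \<ge> 1}"

end

theory Submission
  imports Defs
begin

(* Fix a maximal ideal I of the function algebra F and call a set S of
   finite subsets "large" (for I) if the indicator of its complement lies in I.
   Large sets form a filter (closed under intersection), and the projection J
   identifies two functions that agree on a large set.  Consequently:
   (a) for a fine ideal and positive weights, the total weight of l is nonzero on the
       large set of all l containing a fixed point, so the NAP probability P(A) is J of
       the pointwise ratio  weight(l \<inter> A) / weight(l);
   (b) if for every n some large set carries |h| < 1/n, then J h is infinitesimal.
   For the theorem, the set of initial segments {1..m} is large by hypothesis and the
   segments containing the point max M 1 are those with m \<ge> M; their intersection is a
   large set on which the ratio minus L is |A \<inter> {1..m}|/m - L, which is < 1/n in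
   absolute value once M is chosen from the classical limit.  Then (a) and (b) apply. *)

lemma FunAlg_carrier [simp]: "carrier FunAlg = UNIV"
  and FunAlg_mult [simp]: "x \<otimes>\<^bsub>FunAlg\<^esub> y = (\<lambda>l. x l * y l)"
  and FunAlg_add [simp]: "x \<oplus>\<^bsub>FunAlg\<^esub> y = (\<lambda>l. x l + y l)"
  and FunAlg_one [simp]: "\<one>\<^bsub>FunAlg\<^esub> = (\<lambda>_. 1)"
  and FunAlg_zero [simp]: "\<zero>\<^bsub>FunAlg\<^esub> = (\<lambda>_. 0)"
  by (simp_all add: FunAlg_def)

lemma FunAlg_cring: "cring FunAlg"
proof (rule cringI)
  show "abelian_group FunAlg"
  proof (rule abelian_groupI)
    show "\<exists>y\<in>carrier FunAlg. y \<oplus>\<^bsub>FunAlg\<^esub> x = \<zero>\<^bsub>FunAlg\<^esub>" for x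
      by (rule bexI[of _ "\<lambda>l. - x l"]) auto
  qed auto
  show "comm_monoid FunAlg"
    by (rule comm_monoidI) auto
qed (auto simp: distrib_right)

lemma FunAlg_uminus [simp]: "\<ominus>\<^bsub>FunAlg\<^esub> x = (\<lambda>l. - x l)"
proof -
  interpret cring FunAlg by (rule FunAlg_cring)
  show ?thesis by (rule minus_equality) auto
qed

lemma FunAlg_minus [simp]: "x \<ominus>\<^bsub>FunAlg\<^esub> y = (\<lambda>l. x l - y l)"
  by (simp add: a_minus_def)

text \<open>A set S of finite subsets is large for I when the indicator of its complement
  lies in I; modulo I, S then carries all the information about a function.\<close>

definition large :: "('a fset \<Rightarrow> real) set \<Rightarrow> 'a fset set \<Rightarrow> bool" where
  "large I S \<longleftrightarrow> (\<lambda>l. if l \<in> S then 0 else 1) \<in> I"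

context
  fixes I :: "('a fset \<Rightarrow> real) set"
  assumes maximal: "maximalideal I FunAlg"
begin

interpretation maximalideal I FunAlg by (rule maximal)

lemma ideal_mult: "f \<in> I \<Longrightarrow> (\<lambda>l. g l * f l) \<in> I"
  using I_l_closed[of f g] by simp

lemma ideal_add: "f \<in> I \<Longrightarrow> g \<in> I \<Longrightarrow> (\<lambda>l. f l + g l) \<in> I"
  using additive_subgroup.a_closed[OF is_additive_subgroup, of f g] by simp

lemma projJ_hom: "projJ I \<in> ring_hom FunAlg (QF I)"
  unfolding projJ_def by (rule rcos_ring_hom)

lemma projJ_mult: "projJ I f \<otimes>\<^bsub>QF I\<^esub> projJ I g = projJ I (\<lambda>l. f l * g l)"
  using ring_hom_mult[OF projJ_hom, of f g] by simp

lemma projJ_one: "projJ I (\<lambda>_. 1) = \<one>\<^bsub>QF I\<^esub>"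
  using ring_hom_one[OF projJ_hom] by simp

lemma projJ_uminus: "\<ominus>\<^bsub>QF I\<^esub> projJ I f = projJ I (\<lambda>l. - f l)"
proof -
  interpret ring_hom_cring FunAlg "QF I" "projJ I"
    unfolding projJ_def by (rule rcos_ring_hom_cring[OF FunAlg_cring])
  show ?thesis using hom_a_inv[of f] by simp
qed

lemma projJ_diff: "projJ I f \<ominus>\<^bsub>QF I\<^esub> projJ I g = projJ I (\<lambda>l. f l - g l)"
  using ring_hom_add[OF projJ_hom, of f "\<lambda>l. - g l"]
  by (simp add: a_minus_def projJ_uminus)

lemma projJ_eq_iff: "projJ I f = projJ I g \<longleftrightarrow> (\<lambda>l. f l - g l) \<in> I"
proof -
  have "f \<in> I +>\<^bsub>FunAlg\<^esub> g \<longleftrightarrow> (\<lambda>l. f l - g l) \<in> I"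
    using a_rcos_module_minus[OF cring.axioms(1)[OF FunAlg_cring], of g f] by simp
  then show ?thesis
    unfolding projJ_def
    using a_repr_independenceD[of f g] a_repr_independence'[of f g] by auto
qed

lemma large_agree:
  assumes "large I S" "\<And>l. l \<in> S \<Longrightarrow> f l = g l"
  shows "projJ I f = projJ I g"
proof -
  have "(\<lambda>l. (f l - g l) * (if l \<in> S then 0 else 1)) \<in> I"
    using ideal_mult[of "\<lambda>l. if l \<in> S then 0 else 1" "\<lambda>l. f l - g l"] assms(1)
    by (simp add: large_def mult.commute)
  moreover have "(\<lambda>l. (f l - g l) * (if l \<in> S then 0 else 1)) = (\<lambda>l. f l - g l)"
    using assms(2) by auto
  ultimately show ?thesis by (simp add: projJ_eq_iff)
qed

text \<open>A function vanishing nowhere on a large set is invertible modulo I, hence not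
  in the proper ideal I.\<close>

lemma large_nonvanishing_notin:
  assumes "large I S" "\<And>l. l \<in> S \<Longrightarrow> h l \<noteq> 0"
  shows "h \<notin> I"
proof
  assume "h \<in> I"
  then have "(\<lambda>l. (if l \<in> S then 1 / h l else 0) * h l) \<in> I"
    by (rule ideal_mult)
  then have "(\<lambda>l. (if l \<in> S then 1 / h l else 0) * h l + (if l \<in> S then 0 else 1)) \<in> I"
    using ideal_add assms(1) by (simp add: large_def)
  moreover have "(\<lambda>l. (if l \<in> S then 1 / h l else 0) * h l + (if l \<in> S then 0 else 1)) = (\<lambda>_. 1)"
    using assms(2) by (auto simp: fun_eq_iff)
  ultimately have "I = carrier FunAlg"
    by (intro one_imp_carrier) simp
  then show False using I_notcarr by simp
qed

lemma large_Int:
  assumes "large I S" "large I T"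
  shows "large I (S \<inter> T)"
proof -
  have "(\<lambda>l. (if l \<in> S then 1 else 0) * (if l \<in> T then 0 else 1)) \<in> I"
    using assms(2) ideal_mult by (simp add: large_def)
  then have "(\<lambda>l. (if l \<in> S then 0 else 1) + (if l \<in> S then 1 else 0) * (if l \<in> T then 0 else 1)) \<in> I"
    using ideal_add assms(1) by (simp add: large_def)
  moreover have "(\<lambda>l. (if l \<in> S then 0 else 1) + (if l \<in> S then 1 else 0) * (if l \<in> T then 0 else 1))
      = (\<lambda>l. if l \<in> S \<inter> T then 0 else (1::real))"
    by (auto simp: fun_eq_iff)
  ultimately show ?thesis by (simp add: large_def)
qed

lemma large_qlt:
  assumes "large I S" "\<And>l. l \<in> S \<Longrightarrow> k l < c"
  shows "qlt I (projJ I k) (projJ I (\<lambda>_. c))"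
proof -
  have "projJ I k = projJ I (\<lambda>l. min (k l) c)"
    using assms(2) by (intro large_agree[OF assms(1)]) (simp add: less_imp_le)
  then have "qle I (projJ I k) (projJ I (\<lambda>_. c))"
    unfolding qle_def by fastforce
  moreover have "(\<lambda>l. k l - c) \<notin> I"
    using assms(2) by (intro large_nonvanishing_notin[OF assms(1)]) (simp add: less_imp_neq)
  ultimately show ?thesis by (simp add: qlt_def projJ_eq_iff)
qed

lemma projJ_inv:
  assumes "large I S" "\<And>l. l \<in> S \<Longrightarrow> c l \<noteq> 0"
  shows "inv\<^bsub>QF I\<^esub> (projJ I c) = projJ I (\<lambda>l. 1 / c l)"
proof -
  interpret Q: cring "QF I" by (rule quotient_is_cring[OF FunAlg_cring])
  have [simp]: "projJ I f \<in> carrier (QF I)" for f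
    using ring_hom_closed[OF projJ_hom] by simp
  have "projJ I c \<otimes>\<^bsub>QF I\<^esub> projJ I (\<lambda>l. 1 / c l) = \<one>\<^bsub>QF I\<^esub>"
    unfolding projJ_mult projJ_one[symmetric] using assms(2) by (intro large_agree[OF assms(1)]) simp
  then show ?thesis
    by (intro Q.inv_unique'[symmetric]) (auto simp: Q.m_comm)
qed

lemma qinfinitesimal_projJ:
  assumes "\<And>n. n \<ge> 1 \<Longrightarrow> \<exists>S. large I S \<and> (\<forall>l\<in>S. \<bar>h l\<bar> < 1 / real n)"
  shows "qinfinitesimal I (projJ I h)"
  unfolding qinfinitesimal_def
proof (intro allI impI)
  fix n :: nat assume "n \<ge> 1"
  then obtain S where S: "large I S" "\<And>l. l \<in> S \<Longrightarrow> \<bar>h l\<bar> < 1 / real n"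
    using assms by blast
  have "qlt I (projJ I h) (projJ I (\<lambda>_. 1 / real n))"
    and "qlt I (projJ I (\<lambda>l. - h l)) (projJ I (\<lambda>_. 1 / real n))"
    using S by (auto intro!: large_qlt simp: abs_less_iff)
  then show "qlt I (qabs I (projJ I h)) (projJ I (\<lambda>_. 1 / real n))"
    by (simp add: qabs_def projJ_uminus)
qed

end

lemma fine_ideal_large_containing:
  assumes "fine_ideal I"
  shows "large I {l. \<omega> |\<in>| l}"
proof -
  have "(\<lambda>l. 1 - chi l \<omega>) \<in> I"
    using assms by (simp add: fine_ideal_def)
  moreover have "(\<lambda>l. 1 - chi l \<omega>) = (\<lambda>l. if l \<in> {l. \<omega> |\<in>| l} then 0 else 1)"
    by (auto simp: chi_def fun_eq_iff)
  ultimately show ?thesis by (simp add: large_def)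
qed

lemma napP_ratio:
  assumes fine: "fine_ideal I" and pos: "\<And>\<omega>. w \<omega> > 0"
  shows "napP w I A =
           projJ I (\<lambda>l. (\<Sum>\<omega>\<in>fset l \<inter> A. w \<omega>) * (1 / (\<Sum>\<omega>\<in>fset l. w \<omega>)))"
proof -
  have maximal: "maximalideal I FunAlg"
    using fine by (simp add: fine_ideal_def)
  (* any point will do: the sets containing it form a large set *)
  fix \<omega>0 :: 'a
  have total_nonzero: "(\<Sum>\<omega>\<in>fset l. w \<omega>) \<noteq> 0" if "l \<in> {l. \<omega>0 |\<in>| l}" for l
  proof -
    have "0 < w \<omega>0" by (rule pos)
    also have "\<dots> \<le> (\<Sum>\<omega>\<in>fset l. w \<omega>)"
      using that pos by (intro member_le_sum) (auto intro: less_imp_le)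
    finally show ?thesis by simp
  qed
  have "inv\<^bsub>QF I\<^esub> (projJ I (\<lambda>l. \<Sum>\<omega>\<in>fset l. w \<omega>)) = projJ I (\<lambda>l. 1 / (\<Sum>\<omega>\<in>fset l. w \<omega>))"
    using total_nonzero by (rule projJ_inv[OF maximal fine_ideal_large_containing[OF fine]])
  then show ?thesis
    unfolding napP_def by (simp only: projJ_mult[OF maximal])
qed

lemma initseg_finite: "finite (initseg m)"
  by (simp add: initseg_def)

lemma card_initseg: "card (initseg m) = m"
proof -
  have "inj_on Abs_pnat {1..m}"
    by (rule inj_onI) (simp add: Abs_pnat_inject)
  then show ?thesis by (simp add: initseg_def card_image)
qed

lemma mem_initseg_le: "k \<ge> 1 \<Longrightarrow> Abs_pnat k \<in> initseg m \<Longrightarrow> k \<le> m"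
  unfolding initseg_def by (auto simp: Abs_pnat_inject)

lemma Lambda_nE:
  assumes "l \<in> Lambda_n"
  obtains m where "fset l = initseg m"
  using assms unfolding Lambda_n_def
  by (auto simp: Abs_fset_inverse initseg_finite)

lemma ratio_on_long_initseg:
  assumes "l \<in> Lambda_n \<inter> {l. Abs_pnat (max M 1) |\<in>| l}"
  obtains m where "m \<ge> M"
    "(\<Sum>\<omega>\<in>fset l \<inter> A. (1::real)) * (1 / (\<Sum>\<omega>\<in>fset l. 1)) = real (card (A \<inter> initseg m)) / real m"
proof -
  have l: "l \<in> Lambda_n" and long: "Abs_pnat (max M 1) \<in> fset l"
    using assms by auto
  obtain m where m: "fset l = initseg m"
    using l by (rule Lambda_nE)
  have "max M 1 \<le> m"
    using long m mem_initseg_le[of "max M 1" m] by simp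
  then have "M \<le> m" by simp
  moreover have "(\<Sum>\<omega>\<in>fset l \<inter> A. (1::real)) * (1 / (\<Sum>\<omega>\<in>fset l. 1))
      = real (card (A \<inter> initseg m)) / real m"
    by (simp add: m card_initseg Int_commute[of "initseg m"])
  ultimately show ?thesis
    by (rule that)
qed

theorem mainTheorem12:
  fixes I :: "(pnat fset \<Rightarrow> real) set" and A :: "pnat set" and L :: real
  assumes "fine_ideal I"
    and "I0 Lambda_n \<subseteq> I"
    and "(\<lambda>n. real (card (A \<inter> initseg n)) / real n) \<longlonglongrightarrow> L"
  shows "qinfinitesimal I (napP (\<lambda>_. 1) I A \<ominus>\<^bsub>QF I\<^esub> projJ I (\<lambda>_. L))"
proof -
  have maximal: "maximalideal I FunAlg"
    using assms(1) by (simp add: fine_ideal_def)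
  have Lambda_large: "large I Lambda_n"
    using assms(2) by (auto simp: large_def I0_def)
  define ratio where "ratio l = (\<Sum>\<omega>\<in>fset l \<inter> A. (1::real)) * (1 / (\<Sum>\<omega>\<in>fset l. 1))"
    for l :: "pnat fset"
  have "napP (\<lambda>_. 1) I A \<ominus>\<^bsub>QF I\<^esub> projJ I (\<lambda>_. L) = projJ I (\<lambda>l. ratio l - L)"
    using napP_ratio[OF assms(1), of "\<lambda>_. 1"] projJ_diff[OF maximal]
    by (simp add: ratio_def)
  moreover have "\<exists>S. large I S \<and> (\<forall>l\<in>S. \<bar>ratio l - L\<bar> < 1 / real n)" if "n \<ge> 1" for n
  proof -
    have "0 < 1 / real n" using that by simp
    from tendstoD[OF assms(3) this]
    obtain M where M: "\<And>m. m \<ge> M \<Longrightarrow> \<bar>real (card (A \<inter> initseg m)) / real m - L\<bar> < 1 / real n"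
      by (auto simp: eventually_sequentially dist_real_def)
    let ?S = "Lambda_n \<inter> {l. Abs_pnat (max M 1) |\<in>| l}"
    have "large I ?S"
      by (rule large_Int[OF maximal Lambda_large fine_ideal_large_containing[OF assms(1)]])
    moreover have "\<bar>ratio l - L\<bar> < 1 / real n" if l_in_S: "l \<in> ?S" for l
    proof -
      obtain m where "m \<ge> M" "ratio l = real (card (A \<inter> initseg m)) / real m"
        using l_in_S unfolding ratio_def by (rule ratio_on_long_initseg)
      then show ?thesis using M by simp
    qed
    ultimately show ?thesis by blast
  qed
  ultimately show ?thesis
    using qinfinitesimal_projJ[OF maximal] by simp
qed

end
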